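(* Let $\mathcal{G}$ be a finite tree, let $i,j$ be nodes, and let $(v_0=i,v_1,\dots,v_N=j)$ be the unique path from $i$ to $j$, $N\ge1$. For $0\le n\le N-1$ let $\mathcal{G}_n$ be the connected component containing $v_n$ of the graph obtained from $\mathcal{G}$ by deleting the edge $(v_n,v_{n+1})$, with edge set $\mathcal{E}(\mathcal{G}_n)$, and let $d_{v_n}$ denote the degree of $v_n$ in $\mathcal{G}$. Then the access time of the begrudgingly backtracking random walk from $i$ to $j$ is $$\tilde{\mathtt{t}}(i,j)=\sum_{n=0}^{N-1}\Bigl(1+2|\mathcal{E}(\mathcal{G}_n)|\cdot\frac{d_{v_n}-1}{d_{v_n}}\Bigr)-\sum_{n=1}^{N-1}\frac{2|\mathcal{E}(\mathcal{G}_{n-1})|}{d_{v_n}}-\sum_{n=1}^{N-1}\frac{2}{d_{v_n}}.$$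
   Context: Begrudgingly backtracking random walk (BBRW) on $\mathcal{G}$: $x_1$ is uniform on the neighbors of $x_0$; for $n\ge0$, given $x_n=u,x_{n+1}=v$, $x_{n+2}$ is uniform on $\mathcal{N}(v)\setminus\{u\}$ if this set is nonempty, and $x_{n+2}=u$ otherwise. For a node $k$, $T_k=\min\{n\ge0:x_n=k\}$ and the access time is $\tilde{\mathtt{t}}(i,k)=\mathbb{E}[T_k\mid x_0=i]$. *)

theory Defs
  imports Complex_Main
begin

definition simple_graph :: "'a set \<Rightarrow> ('a \<Rightarrow> 'a \<Rightarrow> bool) \<Rightarrow> bool" where
  "simple_graph V E \<longleftrightarrow> finite V \<and>
     (\<forall>a b. E a b \<longrightarrow> a \<in> V \<and> b \<in> V \<and> a \<noteq> b \<and> E b a)"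

definition is_path :: "('a \<Rightarrow> 'a \<Rightarrow> bool) \<Rightarrow> 'a list \<Rightarrow> bool" where
  "is_path E vs \<longleftrightarrow> vs \<noteq> [] \<and> distinct vs \<and>
     (\<forall>m. m + 1 < length vs \<longrightarrow> E (vs ! m) (vs ! (m + 1)))"

definition graph_connected :: "'a set \<Rightarrow> ('a \<Rightarrow> 'a \<Rightarrow> bool) \<Rightarrow> bool" where
  "graph_connected V E \<longleftrightarrow> (\<forall>a\<in>V. \<forall>b\<in>V. E\<^sup>*\<^sup>* a b)"

definition acyclic_graph :: "('a \<Rightarrow> 'a \<Rightarrow> bool) \<Rightarrow> bool" where
  "acyclic_graph E \<longleftrightarrow> \<not> (\<exists>cs. 3 \<le> length cs \<and> is_path E cs \<and> E (last cs) (hd cs))"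

definition is_tree :: "'a set \<Rightarrow> ('a \<Rightarrow> 'a \<Rightarrow> bool) \<Rightarrow> bool" where
  "is_tree V E \<longleftrightarrow> simple_graph V E \<and> V \<noteq> {} \<and> graph_connected V E \<and> acyclic_graph E"

definition nbrs :: "'a set \<Rightarrow> ('a \<Rightarrow> 'a \<Rightarrow> bool) \<Rightarrow> 'a \<Rightarrow> 'a set" where
  "nbrs V E v = {u \<in> V. E v u}"

definition deg :: "'a set \<Rightarrow> ('a \<Rightarrow> 'a \<Rightarrow> bool) \<Rightarrow> 'a \<Rightarrow> nat" where
  "deg V E v = card (nbrs V E v)"

text \<open>Edge set (as unordered pairs) of the connected component containing a of the graph
  obtained by deleting the edge {a,b}.\<close>
definition comp_edges :: "('a \<Rightarrow> 'a \<Rightarrow> bool) \<Rightarrow> 'a \<Rightarrow> 'a \<Rightarrow> 'a set set" where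
  "comp_edges E a b =
     (let E' = (\<lambda>p q. E p q \<and> {p, q} \<noteq> {a, b})
      in {{x, y} | x y. E' x y \<and> E'\<^sup>*\<^sup>* a x})"

definition bbrw_step :: "'a set \<Rightarrow> ('a \<Rightarrow> 'a \<Rightarrow> bool) \<Rightarrow> 'a \<Rightarrow> 'a \<Rightarrow> 'a \<Rightarrow> real" where
  "bbrw_step V E u v w =
     (let S = nbrs V E v - {u} in
      if S \<noteq> {} then (if w \<in> S then 1 / real (card S) else 0)
      else (if w = u then 1 else 0))"

text \<open>Probability that (x_0, ..., x_n) = xs when x_0 = i (x_1 uniform on neighbours of x_0).\<close>
definition bbrw_walk_prob :: "'a set \<Rightarrow> ('a \<Rightarrow> 'a \<Rightarrow> bool) \<Rightarrow> 'a \<Rightarrow> 'a list \<Rightarrow> real" where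
  "bbrw_walk_prob V E i xs =
     (if xs = [] then 0 else
       (if hd xs = i then 1 else 0) *
       (if 2 \<le> length xs then
          (if xs ! 1 \<in> nbrs V E (xs ! 0) then 1 / real (deg V E (xs ! 0)) else 0)
        else 1) *
       (\<Prod>m<length xs - 2. bbrw_step V E (xs ! m) (xs ! (m + 1)) (xs ! (m + 2))))"

text \<open>P(T_k > n | x_0 = i): probability that x_0, ..., x_n all differ from k.\<close>
definition bbrw_tail :: "'a set \<Rightarrow> ('a \<Rightarrow> 'a \<Rightarrow> bool) \<Rightarrow> 'a \<Rightarrow> 'a \<Rightarrow> nat \<Rightarrow> real" where
  "bbrw_tail V E i k n =
     (\<Sum>xs \<in> {xs. set xs \<subseteq> V \<and> length xs = Suc n \<and> k \<notin> set xs}. bbrw_walk_prob V E i xs)"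

text \<open>Access time E[T_k | x_0 = i] = sum over n of P(T_k > n); the theorem asserts that
  this series converges to the stated value (in particular the access time is finite).\<close>

end

theory Submission
  imports Defs
begin

text \<open>The proof is a first-step analysis. A walk that has just moved from u to v has an expected
  remaining time h u v in closed form: if j lies behind v, the walk first traverses every edge of
  the branch beyond v twice and returns to u; if j lies ahead, it saves, compared with a fresh
  start at v, the excursion towards u that a fresh walk makes with probability 1 / d v. For the
  hitting time A v from v these formulas give A v = A (next v) + (the summand of the theorem at v),
  where next v is the neighbour of v towards j, and this telescopes along the path from i to j.
  To justify the closed forms it suffices that h solves the one-step equation and is nonnegative:
  then the partial sums of P(T_j > m) plus E[h; T_j > n] stay equal to A i, and
  E[h; T_j > n] = O(P(T_j > n)) tends to 0 because the tail probabilities are summable.\<close>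

section \<open>Walk probabilities of the begrudgingly backtracking random walk\<close>

locale sgraph =
  fixes V :: "'a set" and E :: "'a \<Rightarrow> 'a \<Rightarrow> bool"
  assumes simple_graph: "simple_graph V E"
begin

lemma finite_V: "finite V"
  using simple_graph by (simp add: simple_graph_def)

lemma adj_sym: "E a b \<Longrightarrow> E b a"
  using simple_graph by (simp add: simple_graph_def)

lemma adj_in_V: "E a b \<Longrightarrow> a \<in> V" "E a b \<Longrightarrow> b \<in> V"
  using simple_graph by (simp_all add: simple_graph_def)

lemma adj_irrefl: "E a b \<Longrightarrow> a \<noteq> b"
  using simple_graph by (simp add: simple_graph_def)

lemma in_nbrs_iff: "w \<in> nbrs V E v \<longleftrightarrow> E v w"
  using adj_in_V by (auto simp: nbrs_def)

lemma finite_nbrs: "finite (nbrs V E v)"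
  using finite_V by (simp add: nbrs_def)

definition bbrw_trans :: "'a list \<Rightarrow> 'a \<Rightarrow> real" where
  "bbrw_trans ys w =
     (if length ys = 1 then (if w \<in> nbrs V E (hd ys) then 1 / real (deg V E (hd ys)) else 0)
      else bbrw_step V E (ys ! (length ys - 2)) (last ys) w)"

lemma bbrw_walk_prob_snoc:
  assumes "ys \<noteq> []"
  shows "bbrw_walk_prob V E i (ys @ [w]) = bbrw_walk_prob V E i ys * bbrw_trans ys w"
proof (cases "length ys = 1")
  case True
  then obtain a where "ys = [a]" by (cases ys) auto
  then show ?thesis by (simp add: bbrw_walk_prob_def bbrw_trans_def)
next
  case False
  then obtain n where n: "length ys = Suc (Suc n)"
    using assms False by (cases ys; cases "tl ys") auto
  then have "last ys = ys ! Suc n" using assms by (simp add: last_conv_nth)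
  let ?step = "\<lambda>xs m. bbrw_step V E (xs ! m) (xs ! (m + 1)) (xs ! (m + 2))"
  have "(\<Prod>m<length (ys @ [w]) - 2. ?step (ys @ [w]) m)
      = (\<Prod>m<length ys - 2. ?step ys m) * bbrw_step V E (ys ! n) (last ys) w"
    using n \<open>last ys = ys ! Suc n\<close> by (simp add: nth_append cong: prod.cong_simp)
  moreover have "(ys @ [w]) ! 0 = ys ! 0" "(ys @ [w]) ! 1 = ys ! 1"
    using n by (simp_all add: nth_append)
  ultimately show ?thesis
    using assms n by (simp add: bbrw_walk_prob_def bbrw_trans_def)
qed

lemma bbrw_step_nonneg: "0 \<le> bbrw_step V E u v w"
  by (simp add: bbrw_step_def Let_def)

lemma bbrw_walk_prob_nonneg: "0 \<le> bbrw_walk_prob V E i xs"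
  by (simp add: bbrw_walk_prob_def prod_nonneg bbrw_step_nonneg)

lemma bbrw_walk_prob_last_edge:
  "bbrw_walk_prob V E i xs \<noteq> 0 \<Longrightarrow> 2 \<le> length xs \<Longrightarrow> E (xs ! (length xs - 2)) (last xs)"
proof (induction xs rule: rev_induct)
  case Nil
  then show ?case by simp
next
  case (snoc w ys)
  have ys: "ys \<noteq> []" using snoc.prems by auto
  then have prob: "bbrw_walk_prob V E i ys \<noteq> 0" and trans: "bbrw_trans ys w \<noteq> 0"
    using snoc.prems bbrw_walk_prob_snoc by auto
  have "E (last ys) w"
  proof (cases "length ys = 1")
    case True
    then obtain a where "ys = [a]" by (cases ys) auto
    then show ?thesis using trans by (auto simp: bbrw_trans_def in_nbrs_iff split: if_splits)
  next
    case False
    then have "E (ys ! (length ys - 2)) (last ys)"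
      using snoc.IH prob ys by (cases ys) (auto simp: Suc_le_eq)
    moreover have "E (last ys) w \<or> w = ys ! (length ys - 2)"
      using trans False by (auto simp: bbrw_trans_def bbrw_step_def Let_def in_nbrs_iff split: if_splits)
    ultimately show ?thesis using adj_sym by blast
  qed
  moreover have "(ys @ [w]) ! (length (ys @ [w]) - 2) = last ys"
    using ys by (simp add: nth_append last_conv_nth)
  ultimately show ?case by simp
qed

lemma bbrw_step_expectation:
  assumes "E u v"
  shows "(\<Sum>w\<in>V. bbrw_step V E u v w * f w) =
    (if nbrs V E v - {u} = {} then f u
     else (\<Sum>w\<in>nbrs V E v - {u}. f w) / real (card (nbrs V E v - {u})))"
proof (cases "nbrs V E v - {u} = {}")
  case True
  then have "(\<Sum>w\<in>V. bbrw_step V E u v w * f w) = (\<Sum>w\<in>V. if w = u then f w else 0)"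
    by (intro sum.cong) (simp_all add: bbrw_step_def)
  then show ?thesis using True adj_in_V(1)[OF assms] finite_V by simp
next
  case False
  let ?S = "nbrs V E v - {u}"
  have "(\<Sum>w\<in>V. bbrw_step V E u v w * f w) = (\<Sum>w\<in>V. if w \<in> ?S then f w / real (card ?S) else 0)"
    using False by (intro sum.cong) (simp_all add: bbrw_step_def)
  also have "\<dots> = (\<Sum>w\<in>{w\<in>V. w \<in> ?S}. f w / real (card ?S))"
    using finite_V by (simp only: sum.inter_filter)
  also have "{w\<in>V. w \<in> ?S} = ?S"
    by (auto simp: nbrs_def)
  finally show ?thesis using False by (simp add: sum_divide_distrib)
qed

definition avoiding_walks :: "'a \<Rightarrow> nat \<Rightarrow> 'a list set" where
  "avoiding_walks j n = {xs. set xs \<subseteq> V \<and> length xs = Suc n \<and> j \<notin> set xs}"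

lemma bbrw_tail_eq_sum_avoiding_walks:
  "bbrw_tail V E i j n = (\<Sum>xs\<in>avoiding_walks j n. bbrw_walk_prob V E i xs)"
  unfolding bbrw_tail_def avoiding_walks_def ..

lemma avoiding_walks_0: "avoiding_walks j 0 = (\<lambda>x. [x]) ` (V - {j})"
  by (auto simp: avoiding_walks_def length_Suc_conv)

lemma sum_avoiding_walks_Suc:
  "(\<Sum>xs\<in>avoiding_walks j (Suc n). f xs) = (\<Sum>ys\<in>avoiding_walks j n. \<Sum>w\<in>V - {j}. f (ys @ [w]))"
proof -
  have "avoiding_walks j (Suc n) = (\<lambda>(ys, w). ys @ [w]) ` (avoiding_walks j n \<times> (V - {j}))"
  proof (intro set_eqI iffI)
    fix xs assume xs: "xs \<in> avoiding_walks j (Suc n)"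
    then have "xs \<noteq> []" by (auto simp: avoiding_walks_def)
    with xs have "xs = butlast xs @ [last xs]" "butlast xs \<in> avoiding_walks j n" "last xs \<in> V - {j}"
      using last_in_set[of xs] by (auto simp: avoiding_walks_def dest: in_set_butlastD)
    then show "xs \<in> (\<lambda>(ys, w). ys @ [w]) ` (avoiding_walks j n \<times> (V - {j}))" by force
  qed (auto simp: avoiding_walks_def)
  moreover have "inj_on (\<lambda>(ys, w). ys @ [w]) (avoiding_walks j n \<times> (V - {j}))"
    by (auto simp: inj_on_def)
  ultimately show ?thesis
    by (simp add: sum.reindex sum.cartesian_product case_prod_beta')
qed

end

section \<open>Hitting times from a nonnegative potential\<close>

locale bbrw_potential = sgraph +
  fixes j :: 'a and h :: "'a \<Rightarrow> 'a \<Rightarrow> real"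
  assumes h_target: "\<And>u. h u j = 0"
    and h_bellman: "\<And>u v. E u v \<Longrightarrow> v \<noteq> j \<Longrightarrow> h u v = 1 + (\<Sum>w\<in>V. bbrw_step V E u v w * h v w)"
    and h_nonneg: "\<And>u v. E u v \<Longrightarrow> 0 \<le> h u v"
begin

definition start_value :: "'a \<Rightarrow> real" where
  "start_value i = 1 + (\<Sum>w\<in>nbrs V E i. h i w) / real (deg V E i)"

definition walk_value :: "'a \<Rightarrow> 'a list \<Rightarrow> real" where
  "walk_value i xs = (if length xs = 1 then start_value i else h (xs ! (length xs - 2)) (last xs))"

text \<open>The expectation of the potential at time n on the event T_j > n. By the Bellman
  equation, the partial sums of P(T_j > m) plus this quantity do not depend on n.\<close>

definition residual :: "'a \<Rightarrow> nat \<Rightarrow> real" where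
  "residual i n = (\<Sum>xs\<in>avoiding_walks j n. bbrw_walk_prob V E i xs * walk_value i xs)"

lemma start_value_nonneg: "0 \<le> start_value i"
  unfolding start_value_def
  by (intro add_nonneg_nonneg divide_nonneg_nonneg sum_nonneg) (auto simp: h_nonneg in_nbrs_iff)

lemma sum_without_target: "(\<Sum>w\<in>V - {j}. g w * h v w) = (\<Sum>w\<in>V. g w * h v w)"
  using finite_V by (simp add: sum_diff1 h_target)

lemma expected_walk_value_step:
  assumes ys: "ys \<in> avoiding_walks j n" and prob: "bbrw_walk_prob V E i ys \<noteq> 0"
  shows "(\<Sum>w\<in>V - {j}. bbrw_trans ys w * walk_value i (ys @ [w])) = walk_value i ys - 1"
proof (cases "length ys = 1")
  case True
  then obtain a where a: "ys = [a]" by (cases ys) auto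
  then have "a = i" using prob by (simp add: bbrw_walk_prob_def split: if_splits)
  have "(\<Sum>w\<in>V - {j}. bbrw_trans ys w * walk_value i (ys @ [w]))
      = (\<Sum>w\<in>V - {j}. (if w \<in> nbrs V E i then 1 / real (deg V E i) else 0) * h i w)"
    using a \<open>a = i\<close> by (intro sum.cong) (simp_all add: bbrw_trans_def walk_value_def)
  also have "\<dots> = (\<Sum>w\<in>V. (if w \<in> nbrs V E i then 1 / real (deg V E i) else 0) * h i w)"
    by (rule sum_without_target)
  also have "\<dots> = (\<Sum>w\<in>V. if w \<in> nbrs V E i then h i w / real (deg V E i) else 0)"
    by (intro sum.cong) auto
  also have "\<dots> = (\<Sum>w\<in>{w\<in>V. w \<in> nbrs V E i}. h i w / real (deg V E i))"
    using finite_V by (simp only: sum.inter_filter)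
  also have "{w\<in>V. w \<in> nbrs V E i} = nbrs V E i"
    by (auto simp: nbrs_def)
  finally show ?thesis using True by (simp add: walk_value_def start_value_def sum_divide_distrib)
next
  case False
  have "ys \<noteq> []" using ys by (auto simp: avoiding_walks_def)
  then have "2 \<le> length ys" using False by (cases ys) (auto simp: Suc_le_eq)
  let ?u = "ys ! (length ys - 2)" and ?v = "last ys"
  have "E ?u ?v" using bbrw_walk_prob_last_edge prob \<open>2 \<le> length ys\<close> by blast
  moreover have "?v \<noteq> j" using ys last_in_set[OF \<open>ys \<noteq> []\<close>] by (auto simp: avoiding_walks_def)
  moreover have "(\<Sum>w\<in>V - {j}. bbrw_trans ys w * walk_value i (ys @ [w]))
      = (\<Sum>w\<in>V - {j}. bbrw_step V E ?u ?v w * h ?v w)"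
    using False \<open>ys \<noteq> []\<close> by (intro sum.cong) (simp_all add: bbrw_trans_def walk_value_def nth_append last_conv_nth)
  ultimately show ?thesis
    using False by (simp add: walk_value_def sum_without_target h_bellman)
qed

lemma residual_Suc: "residual i (Suc n) = residual i n - bbrw_tail V E i j n"
proof -
  have "residual i (Suc n) = (\<Sum>ys\<in>avoiding_walks j n.
          \<Sum>w\<in>V - {j}. bbrw_walk_prob V E i (ys @ [w]) * walk_value i (ys @ [w]))"
    unfolding residual_def by (rule sum_avoiding_walks_Suc)
  also have "\<dots> = (\<Sum>ys\<in>avoiding_walks j n.
          bbrw_walk_prob V E i ys * walk_value i ys - bbrw_walk_prob V E i ys)"
  proof (rule sum.cong)
    fix ys assume ys: "ys \<in> avoiding_walks j n"
    then have "ys \<noteq> []" by (auto simp: avoiding_walks_def)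
    then have "(\<Sum>w\<in>V - {j}. bbrw_walk_prob V E i (ys @ [w]) * walk_value i (ys @ [w]))
        = bbrw_walk_prob V E i ys * (\<Sum>w\<in>V - {j}. bbrw_trans ys w * walk_value i (ys @ [w]))"
      by (simp add: bbrw_walk_prob_snoc sum_distrib_left mult.assoc)
    also have "\<dots> = bbrw_walk_prob V E i ys * (walk_value i ys - 1)"
      using expected_walk_value_step[OF ys] by (cases "bbrw_walk_prob V E i ys = 0") auto
    finally show "(\<Sum>w\<in>V - {j}. bbrw_walk_prob V E i (ys @ [w]) * walk_value i (ys @ [w]))
        = bbrw_walk_prob V E i ys * walk_value i ys - bbrw_walk_prob V E i ys"
      by (simp add: algebra_simps)
  qed simp
  finally show ?thesis
    by (simp add: residual_def bbrw_tail_eq_sum_avoiding_walks sum_subtractf)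
qed

lemma residual_0:
  assumes "i \<in> V" "i \<noteq> j"
  shows "residual i 0 = start_value i"
proof -
  have "residual i 0 = (\<Sum>x\<in>V - {j}. bbrw_walk_prob V E i [x] * walk_value i [x])"
    unfolding residual_def avoiding_walks_0 by (subst sum.reindex) (auto simp: inj_on_def)
  also have "\<dots> = (\<Sum>x\<in>V - {j}. if x = i then start_value i else 0)"
    by (intro sum.cong) (auto simp: bbrw_walk_prob_def walk_value_def)
  finally show ?thesis using assms finite_V by simp
qed

lemma partial_tail_sum_plus_residual:
  assumes "i \<in> V" "i \<noteq> j"
  shows "(\<Sum>m<n. bbrw_tail V E i j m) + residual i n = start_value i"
  by (induction n) (simp_all add: residual_0[OF assms] residual_Suc)

lemma walk_value_nonneg:
  assumes "bbrw_walk_prob V E i xs \<noteq> 0" "xs \<noteq> []"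
  shows "0 \<le> walk_value i xs"
proof (cases "length xs = 1")
  case False
  then have "2 \<le> length xs" using assms(2) by (cases xs) (auto simp: Suc_le_eq)
  then have "E (xs ! (length xs - 2)) (last xs)"
    using assms(1) bbrw_walk_prob_last_edge by blast
  then show ?thesis using False by (simp add: walk_value_def h_nonneg)
qed (simp add: walk_value_def start_value_nonneg)

lemma residual_nonneg: "0 \<le> residual i n"
  unfolding residual_def
proof (rule sum_nonneg)
  fix xs assume "xs \<in> avoiding_walks j n"
  then have "xs \<noteq> []" by (auto simp: avoiding_walks_def)
  then show "0 \<le> bbrw_walk_prob V E i xs * walk_value i xs"
    using walk_value_nonneg bbrw_walk_prob_nonneg by (cases "bbrw_walk_prob V E i xs = 0") simp_all
qed

lemma residual_le_tail:
  "residual i n \<le> (start_value i + (\<Sum>(a, b)\<in>V \<times> V. \<bar>h a b\<bar>)) * bbrw_tail V E i j n"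
proof -
  let ?M = "start_value i + (\<Sum>(a, b)\<in>V \<times> V. \<bar>h a b\<bar>)"
  have "walk_value i xs \<le> ?M" if xs: "xs \<in> avoiding_walks j n" for xs
  proof -
    have "xs \<noteq> []" "set xs \<subseteq> V" using xs by (auto simp: avoiding_walks_def)
    then have "(xs ! (length xs - 2), last xs) \<in> V \<times> V" by auto
    then have "\<bar>h (xs ! (length xs - 2)) (last xs)\<bar> \<le> (\<Sum>(a, b)\<in>V \<times> V. \<bar>h a b\<bar>)"
      using member_le_sum[of _ "V \<times> V" "\<lambda>(a, b). \<bar>h a b\<bar>"] finite_V by auto
    moreover have "0 \<le> (\<Sum>(a, b)\<in>V \<times> V. \<bar>h a b\<bar>)"
      by (intro sum_nonneg) auto
    ultimately show ?thesis
      using start_value_nonneg[of i] abs_ge_self[of "h (xs ! (length xs - 2)) (last xs)"]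
      by (cases "length xs = 1") (simp_all add: walk_value_def)
  qed
  then have "residual i n \<le> (\<Sum>xs\<in>avoiding_walks j n. bbrw_walk_prob V E i xs * ?M)"
    unfolding residual_def by (intro sum_mono mult_left_mono bbrw_walk_prob_nonneg)
  then show ?thesis
    by (simp add: bbrw_tail_eq_sum_avoiding_walks sum_distrib_right mult.commute)
qed

theorem bbrw_tail_sums_start_value:
  assumes "i \<in> V" "i \<noteq> j"
  shows "(\<lambda>n. bbrw_tail V E i j n) sums start_value i"
proof -
  let ?M = "start_value i + (\<Sum>(a, b)\<in>V \<times> V. \<bar>h a b\<bar>)"
  have partial: "(\<Sum>m<n. bbrw_tail V E i j m) = start_value i - residual i n" for n
    using partial_tail_sum_plus_residual[OF assms] by (simp add: algebra_simps)
  have tail_nonneg: "0 \<le> bbrw_tail V E i j n" for n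
    by (simp add: bbrw_tail_eq_sum_avoiding_walks sum_nonneg bbrw_walk_prob_nonneg)
  have "summable (\<lambda>n. bbrw_tail V E i j n)"
    using tail_nonneg residual_nonneg
    by (intro summableI_nonneg_bounded[of _ "start_value i"]) (simp_all add: partial)
  then have "bbrw_tail V E i j \<longlonglongrightarrow> 0"
    by (rule summable_LIMSEQ_zero)
  then have "(\<lambda>n. ?M * bbrw_tail V E i j n) \<longlonglongrightarrow> 0"
    by (rule tendsto_mult_right_zero)
  from real_tendsto_sandwich[OF _ _ tendsto_const this] have "residual i \<longlonglongrightarrow> 0"
    by (simp add: residual_nonneg residual_le_tail)
  then have "(\<lambda>n. start_value i - residual i n) \<longlonglongrightarrow> start_value i - 0"
    by (intro tendsto_diff tendsto_const)
  then show ?thesis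
    by (simp add: sums_def partial)
qed

end

section \<open>Branches of a tree\<close>

lemma is_path_mono: "is_path R p \<Longrightarrow> (\<And>a b. R a b \<Longrightarrow> S a b) \<Longrightarrow> is_path S p"
  unfolding is_path_def by blast

lemma rtranclp_imp_is_path:
  assumes "R\<^sup>*\<^sup>* a b"
  shows "\<exists>p. is_path R p \<and> hd p = a \<and> last p = b"
  using assms
proof (induction rule: rtranclp_induct)
  case base
  show ?case by (intro exI[of _ "[a]"]) (simp add: is_path_def)
next
  case (step b c)
  then obtain p where p: "is_path R p" "hd p = a" "last p = b" by blast
  show ?case
  proof (cases "c \<in> set p")
    case True
    then obtain k where k: "k < length p" "p ! k = c" by (auto simp: in_set_conv_nth)
    have "is_path R (take (Suc k) p)" using p(1) k unfolding is_path_def by auto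
    moreover have "hd (take (Suc k) p) = a" using p(2) by simp
    moreover have "last (take (Suc k) p) = c" using k by (simp add: take_Suc_conv_app_nth)
    ultimately show ?thesis by blast
  next
    case False
    have "p \<noteq> []" using p(1) by (simp add: is_path_def)
    have "is_path R (p @ [c])"
      unfolding is_path_def
    proof (intro conjI allI impI)
      fix m assume "m + 1 < length (p @ [c])"
      then consider "m + 1 < length p" | "m = length p - 1" by fastforce
      then show "R ((p @ [c]) ! m) ((p @ [c]) ! (m + 1))"
      proof cases
        case 1
        then show ?thesis using p(1) by (simp add: is_path_def nth_append)
      next
        case 2
        then show ?thesis using p(3) step.hyps(2) \<open>p \<noteq> []\<close> by (simp add: nth_append last_conv_nth)
      qed
    qed (use p(1) False in \<open>auto simp: is_path_def\<close>)
    moreover have "hd (p @ [c]) = a" using p by (simp add: is_path_def)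
    ultimately show ?thesis by auto
  qed
qed

locale finite_tree =
  fixes V :: "'a set" and E :: "'a \<Rightarrow> 'a \<Rightarrow> bool"
  assumes is_tree: "is_tree V E"

sublocale finite_tree \<subseteq> sgraph
  using is_tree by unfold_locales (simp add: is_tree_def)

context finite_tree
begin

lemma connected: "a \<in> V \<Longrightarrow> b \<in> V \<Longrightarrow> E\<^sup>*\<^sup>* a b"
  using is_tree by (simp add: is_tree_def graph_connected_def)

lemma no_cycle: "3 \<le> length cs \<Longrightarrow> is_path E cs \<Longrightarrow> \<not> E (last cs) (hd cs)"
  using is_tree by (auto simp: is_tree_def acyclic_graph_def)

definition cut :: "'a \<Rightarrow> 'a \<Rightarrow> 'a \<Rightarrow> 'a \<Rightarrow> bool" where
  "cut u v p q \<longleftrightarrow> E p q \<and> {p, q} \<noteq> {u, v}"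

definition branch :: "'a \<Rightarrow> 'a \<Rightarrow> 'a set" where
  "branch u v = {x. (cut u v)\<^sup>*\<^sup>* v x}"

definition branch_edges :: "'a \<Rightarrow> 'a \<Rightarrow> 'a set set" where
  "branch_edges u v = {{x, y} | x y. cut u v x y \<and> x \<in> branch u v}"

lemma cut_commute: "cut u v = cut v u"
  by (auto simp: fun_eq_iff cut_def insert_commute)

lemma symp_cut: "symp (cut u v)"
  by (auto intro: sympI simp: cut_def adj_sym insert_commute)

lemma head_in_branch: "v \<in> branch u v"
  by (simp add: branch_def)

lemma branch_closed: "x \<in> branch u v \<Longrightarrow> E x y \<Longrightarrow> {x, y} \<noteq> {u, v} \<Longrightarrow> y \<in> branch u v"
  unfolding branch_def cut_def by (auto intro: rtranclp.rtrancl_into_rtrancl)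

lemma branch_subset_V:
  assumes "v \<in> V"
  shows "branch u v \<subseteq> V"
proof
  fix x assume "x \<in> branch u v"
  then have "(cut u v)\<^sup>*\<^sup>* v x" by (simp add: branch_def)
  then show "x \<in> V"
    by induction (auto simp: assms cut_def adj_in_V)
qed

text \<open>The only place where acyclicity is used: a walk from v back to u avoiding the edge
  {u, v} would close a cycle.\<close>

lemma tail_notin_branch:
  assumes "E u v"
  shows "u \<notin> branch u v"
proof
  assume "u \<in> branch u v"
  then have "(cut u v)\<^sup>*\<^sup>* v u" by (simp add: branch_def)
  then obtain p where p: "is_path (cut u v) p" "hd p = v" "last p = u"
    using rtranclp_imp_is_path[of "cut u v"] by blast
  then have "p \<noteq> []" by (simp add: is_path_def)
  have "u \<noteq> v" using adj_irrefl assms by blast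
  have "length p \<noteq> 1"
  proof
    assume "length p = 1"
    then have "hd p = last p" by (cases p) auto
    then show False using p \<open>u \<noteq> v\<close> by simp
  qed
  moreover have "length p \<noteq> 2"
  proof
    assume "length p = 2"
    then have "cut u v (p ! 0) (p ! 1)" using p(1) by (simp add: is_path_def)
    moreover have "p ! 0 = v" "p ! 1 = u"
      using p \<open>p \<noteq> []\<close> \<open>length p = 2\<close> by (simp_all add: hd_conv_nth last_conv_nth)
    ultimately show False by (simp add: cut_def insert_commute)
  qed
  moreover have "length p \<noteq> 0" using \<open>p \<noteq> []\<close> by simp
  ultimately have "3 \<le> length p" by linarith
  moreover have "is_path E p" using p(1) by (rule is_path_mono) (simp add: cut_def)
  ultimately have "\<not> E (last p) (hd p)" by (rule no_cycle)
  then show False using p assms by simp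
qed

lemma branch_cover:
  assumes "E u v" "x \<in> V"
  shows "x \<in> branch u v \<or> x \<in> branch v u"
proof -
  have "E\<^sup>*\<^sup>* u x" using connected adj_in_V assms by blast
  then show ?thesis
  proof (induction rule: rtranclp_induct)
    case base
    show ?case by (simp add: head_in_branch)
  next
    case (step a b)
    show ?case
    proof (cases "{a, b} = {u, v}")
      case True
      then show ?thesis by (auto simp: doubleton_eq_iff head_in_branch)
    next
      case False
      then show ?thesis
        using step branch_closed[of a u v b] branch_closed[of a v u b] by (auto simp: insert_commute)
    qed
  qed
qed

lemma branch_disjoint:
  assumes "E u v"
  shows "branch u v \<inter> branch v u = {}"
proof -
  have "(cut u v)\<^sup>*\<^sup>* v u" if "x \<in> branch u v" "x \<in> branch v u" for x
  proof -
    have "(cut u v)\<^sup>*\<^sup>* u x" using that(2) by (simp add: branch_def cut_commute[of v u])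
    then have "(cut u v)\<^sup>*\<^sup>* x u" using sympD[OF symp_rtranclp[OF symp_cut]] by blast
    with that(1) show ?thesis by (simp add: branch_def)
  qed
  then show ?thesis using tail_notin_branch[OF assms] by (auto simp: branch_def)
qed

lemma branch_nested:
  assumes "E u v" "E v w" "w \<noteq> u"
  shows "branch v w \<subseteq> branch u v"
proof
  fix y assume "y \<in> branch v w"
  then have "(cut v w)\<^sup>*\<^sup>* w y" by (simp add: branch_def)
  then show "y \<in> branch u v"
  proof (induction rule: rtranclp_induct)
    case base
    have "{v, w} \<noteq> {u, v}" using assms adj_irrefl by (auto simp: doubleton_eq_iff)
    then show ?case using branch_closed head_in_branch assms by blast
  next
    case (step a b)
    then have "a \<in> branch v w" "b \<in> branch v w"
      by (auto simp: branch_def intro: rtranclp.rtrancl_into_rtrancl)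
    then have "a \<noteq> v" "b \<noteq> v" using tail_notin_branch[OF assms(2)] by auto
    then have "{a, b} \<noteq> {u, v}" by auto
    moreover have "E a b" using step.hyps(2) by (simp add: cut_def)
    ultimately show ?case using branch_closed[OF step.IH] by blast
  qed
qed

lemma sibling_branches_disjoint:
  assumes "E v w" "E v w'" "w \<noteq> w'"
  shows "branch v w \<inter> branch v w' = {}"
proof -
  have "branch v w' \<subseteq> branch w v" using branch_nested[of w v w'] assms adj_sym by blast
  then show ?thesis using branch_disjoint[OF assms(1)] by blast
qed

lemma branch_decomp:
  assumes "E u v"
  shows "branch u v = insert v (\<Union>w\<in>nbrs V E v - {u}. branch v w)"
proof
  show "insert v (\<Union>w\<in>nbrs V E v - {u}. branch v w) \<subseteq> branch u v"
  proof (intro insert_subsetI UN_least)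
    fix w assume "w \<in> nbrs V E v - {u}"
    then show "branch v w \<subseteq> branch u v" using branch_nested[OF assms] by (simp add: in_nbrs_iff)
  qed (rule head_in_branch)
next
  show "branch u v \<subseteq> insert v (\<Union>w\<in>nbrs V E v - {u}. branch v w)"
  proof
    fix x assume "x \<in> branch u v"
    then have "(cut u v)\<^sup>*\<^sup>* v x" by (simp add: branch_def)
    then show "x \<in> insert v (\<Union>w\<in>nbrs V E v - {u}. branch v w)"
    proof (induction rule: rtranclp_induct)
      case (step a b)
      then have ab: "E a b" "{a, b} \<noteq> {u, v}" by (auto simp: cut_def)
      show ?case
      proof (cases "a = v")
        case True
        then have "b \<in> nbrs V E v - {u}" using ab by (auto simp: in_nbrs_iff insert_commute)
        then show ?thesis using head_in_branch[of b v] by blast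
      next
        case False
        then obtain w where w: "w \<in> nbrs V E v - {u}" "a \<in> branch v w" using step.IH by blast
        then show ?thesis
          using branch_closed[OF w(2) ab(1)] False by (cases "{a, b} = {v, w}") (auto simp: doubleton_eq_iff)
      qed
    qed simp
  qed
qed

lemma comp_edges_eq_branch_edges: "comp_edges E v u = branch_edges u v"
proof -
  have "(\<lambda>p q. E p q \<and> {p, q} \<noteq> {v, u}) = cut u v"
    by (auto simp: cut_def insert_commute fun_eq_iff)
  then show ?thesis by (simp add: comp_edges_def branch_edges_def branch_def Let_def)
qed

lemma finite_branch_edges: "finite (branch_edges u v)"
proof (rule finite_subset)
  show "branch_edges u v \<subseteq> Pow V" by (auto simp: branch_edges_def cut_def adj_in_V)
qed (simp add: finite_V)

lemma branch_edges_subset_branch: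
  assumes "e \<in> branch_edges u v"
  shows "e \<subseteq> branch u v"
  using assms branch_closed unfolding branch_edges_def cut_def by blast

lemma branch_edges_decomp:
  assumes "E u v"
  shows "branch_edges u v = (\<Union>w\<in>nbrs V E v - {u}. insert {v, w} (branch_edges v w))"
proof
  show "branch_edges u v \<subseteq> (\<Union>w\<in>nbrs V E v - {u}. insert {v, w} (branch_edges v w))"
  proof
    fix e assume "e \<in> branch_edges u v"
    then obtain x y where e: "e = {x, y}" "E x y" "{x, y} \<noteq> {u, v}" "x \<in> branch u v"
      by (auto simp: branch_edges_def cut_def)
    then consider "x = v" | w where "w \<in> nbrs V E v - {u}" "x \<in> branch v w"
      using branch_decomp[OF assms] by blast
    then show "e \<in> (\<Union>w\<in>nbrs V E v - {u}. insert {v, w} (branch_edges v w))"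
    proof cases
      case 1
      then show ?thesis using e by (auto simp: in_nbrs_iff)
    next
      case (2 w)
      then show ?thesis using e by (auto simp: branch_edges_def cut_def)
    qed
  qed
next
  show "(\<Union>w\<in>nbrs V E v - {u}. insert {v, w} (branch_edges v w)) \<subseteq> branch_edges u v"
  proof (intro UN_least insert_subsetI)
    fix w assume "w \<in> nbrs V E v - {u}"
    then have w: "E v w" "w \<noteq> u" by (auto simp: in_nbrs_iff)
    then have "{v, w} \<noteq> {u, v}" using adj_irrefl assms by (auto simp: doubleton_eq_iff)
    then show "{v, w} \<in> branch_edges u v"
      using w head_in_branch[of v u] unfolding branch_edges_def cut_def by blast
    show "branch_edges v w \<subseteq> branch_edges u v"
    proof
      fix e assume "e \<in> branch_edges v w"
      then obtain x y where e: "e = {x, y}" "E x y" "x \<in> branch v w"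
        by (auto simp: branch_edges_def cut_def)
      have "branch v w \<subseteq> branch u v" using branch_nested[OF assms w] .
      moreover have "x \<noteq> v" "x \<noteq> u"
        using e(3) calculation tail_notin_branch[OF w(1)] tail_notin_branch[OF assms] by auto
      ultimately show "e \<in> branch_edges u v"
        using e by (auto simp: branch_edges_def cut_def doubleton_eq_iff)
    qed
  qed
qed

lemma card_branch_edges:
  assumes "E u v"
  shows "card (branch_edges u v) = (\<Sum>w\<in>nbrs V E v - {u}. card (branch_edges v w) + 1)"
proof -
  have v_notin: "v \<notin> e" if "e \<in> branch_edges v w" "E v w" for e w
    using branch_edges_subset_branch[OF that(1)] tail_notin_branch[OF that(2)] by blast
  have "insert {v, w} (branch_edges v w) \<inter> insert {v, w'} (branch_edges v w') = {}"
    if "w \<in> nbrs V E v - {u}" "w' \<in> nbrs V E v - {u}" "w \<noteq> w'" for w w'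
  proof -
    have E: "E v w" "E v w'" using that by (auto simp: in_nbrs_iff)
    have "branch_edges v w \<inter> branch_edges v w' = {}"
    proof -
      have "e \<noteq> {}" if "e \<in> branch_edges v w" for e
        using that by (auto simp: branch_edges_def)
      then show ?thesis
        using branch_edges_subset_branch sibling_branches_disjoint[OF E \<open>w \<noteq> w'\<close>] by blast
    qed
    then show ?thesis using v_notin E \<open>w \<noteq> w'\<close> by (auto simp: doubleton_eq_iff)
  qed
  moreover have "{v, w} \<notin> branch_edges v w" if "E v w" for w
    using v_notin that by blast
  ultimately show ?thesis
    unfolding branch_edges_decomp[OF assms]
    by (subst card_UN_disjoint) (auto simp: finite_nbrs finite_branch_edges in_nbrs_iff)
qed

end

section \<open>The access time on a tree\<close>

lemma sum_lessThan_minus_shifted: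
  fixes a b :: "nat \<Rightarrow> 'b::ab_group_add"
  shows "(\<Sum>m<N. a m - (if Suc m = N then 0 else b (Suc m)))
    = (\<Sum>m<N. a m) - (\<Sum>n\<in>{1..<N}. b n)"
proof (cases N)
  case (Suc K)
  have "(\<Sum>m<N. if Suc m = N then 0 else b (Suc m)) = (\<Sum>m<K. b (Suc m))"
    using Suc by (simp add: lessThan_Suc)
  also have "\<dots> = (\<Sum>n\<in>{1..<N}. b n)"
    unfolding Suc One_nat_def sum.shift_bounds_Suc_ivl atLeast0LessThan ..
  finally show ?thesis by (simp add: sum_subtractf)
qed simp

locale tree_target = finite_tree +
  fixes j :: 'a
  assumes target_in_V: "j \<in> V"
begin

abbreviation dg :: "'a \<Rightarrow> real" where
  "dg v \<equiv> real (deg V E v)"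

abbreviation bsize :: "'a \<Rightarrow> 'a \<Rightarrow> real" where
  "bsize u v \<equiv> real (card (branch_edges u v))"

definition toward :: "'a \<Rightarrow> 'a" where
  "toward v = (THE w. E v w \<and> j \<in> branch v w)"

lemma toward_exists:
  assumes "v \<in> V" "v \<noteq> j"
  shows "\<exists>w. E v w \<and> j \<in> branch v w"
proof -
  have "E\<^sup>*\<^sup>* v j" using connected assms target_in_V by blast
  then obtain w0 where w0: "E v w0" using assms(2) by (cases rule: converse_rtranclpE) auto
  consider "j \<in> branch v w0" | "j \<in> branch w0 v" using branch_cover[OF w0 target_in_V] by blast
  then show ?thesis
  proof cases
    case 1
    then show ?thesis using w0 by blast
  next
    case 2
    then show ?thesis using branch_decomp[of w0 v] w0 adj_sym assms(2) by (auto simp: in_nbrs_iff)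
  qed
qed

lemma toward_unique: "E v w \<Longrightarrow> j \<in> branch v w \<Longrightarrow> E v w' \<Longrightarrow> j \<in> branch v w' \<Longrightarrow> w = w'"
  using sibling_branches_disjoint by blast

lemma toward_spec:
  assumes "v \<in> V" "v \<noteq> j"
  shows "E v (toward v)" "j \<in> branch v (toward v)"
proof -
  have "\<exists>!w. E v w \<and> j \<in> branch v w" using toward_exists[OF assms] toward_unique by blast
  then have "E v (toward v) \<and> j \<in> branch v (toward v)" unfolding toward_def by (rule theI')
  then show "E v (toward v)" "j \<in> branch v (toward v)" by auto
qed

lemma toward_eqI:
  assumes "E v w" "j \<in> branch v w"
  shows "toward v = w"
proof -
  have "v \<noteq> j" using tail_notin_branch[OF assms(1)] assms(2) by auto
  then show ?thesis using toward_spec toward_unique adj_in_V assms by metis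
qed

text \<open>The vertices of the path from v to j, without j.\<close>

definition route :: "'a \<Rightarrow> 'a set" where
  "route v = {x \<in> V - {j}. v \<in> branch (toward x) x}"

lemma route_target: "route j = {}"
  using toward_spec branch_disjoint by (fastforce simp: route_def)

lemma route_step:
  assumes "v \<in> V" "v \<noteq> j"
  shows "route v = insert v (route (toward v))" "v \<notin> route (toward v)"
proof -
  let ?p = "toward v"
  have p: "E v ?p" "j \<in> branch v ?p" using toward_spec[OF assms] by auto
  have "{v, ?p} \<noteq> {toward x, x}" if "x \<in> V - {j}" "x \<noteq> v" for x
  proof
    assume "{v, ?p} = {toward x, x}"
    then have "x = ?p" "toward x = v" using that(2) by (auto simp: doubleton_eq_iff)
    then have "j \<in> branch ?p v" using toward_spec that(1) by force
    then show False using branch_disjoint[OF p(1)] p(2) by blast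
  qed
  then have "v \<in> branch (toward x) x \<longleftrightarrow> ?p \<in> branch (toward x) x" if "x \<in> V - {j}" "x \<noteq> v" for x
    using that branch_closed[of v "toward x" x ?p] branch_closed[of ?p "toward x" x v] p(1) adj_sym
    by (metis insert_commute)
  moreover have "?p \<notin> branch ?p v" using tail_notin_branch p(1) adj_sym by blast
  moreover have "v \<in> branch ?p v" by (rule head_in_branch)
  ultimately show "route v = insert v (route ?p)" "v \<notin> route ?p"
    using assms by (auto simp: route_def)
qed

lemma finite_route: "finite (route v)"
  using finite_V by (simp add: route_def)

definition access_increment :: "'a \<Rightarrow> real" where
  "access_increment x = 1 + 2 * bsize (toward x) x * (dg x - 1) / dg x
     - (if toward x = j then 0 else 2 * (bsize (toward x) x + 1) / dg (toward x))"

definition access_time :: "'a \<Rightarrow> real" where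
  "access_time v = (\<Sum>x\<in>route v. access_increment x)"

text \<open>A walk that has just moved from u to v, with j ahead of it, behaves like a walk started
  at v except that it never makes the excursion back to u, which the fresh walk starts with
  probability 1 / d v and which costs 2 (bsize v u + 1) steps.\<close>

definition forward_time :: "'a \<Rightarrow> 'a \<Rightarrow> real" where
  "forward_time u v = (if v = j then 0 else access_time v - 2 * (bsize v u + 1) / dg v)"

text \<open>The expected remaining time of a walk that has just moved from u to v. If j lies behind,
  the walk traverses every edge of the branch beyond v twice before it returns to u.\<close>

definition remaining_time :: "'a \<Rightarrow> 'a \<Rightarrow> real" where
  "remaining_time u v =
     (if v = j then 0
      else if j \<in> branch u v then forward_time u v
      else 2 * bsize u v + 1 + forward_time v u)"

lemma access_time_target: "access_time j = 0"
  by (simp add: access_time_def route_target)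

lemma access_time_step:
  assumes "v \<in> V" "v \<noteq> j"
  shows "access_time v = access_increment v + access_time (toward v)"
  using route_step[OF assms] finite_route by (simp add: access_time_def)

lemma access_time_unfold:
  assumes "v \<in> V" "v \<noteq> j"
  shows "access_time v = 1 + 2 * bsize (toward v) v * (dg v - 1) / dg v + forward_time v (toward v)"
  using access_time_step[OF assms] access_time_target
  by (cases "toward v = j") (simp_all add: access_increment_def forward_time_def)

lemma remaining_time_toward:
  assumes "v \<in> V" "v \<noteq> j"
  shows "remaining_time v (toward v) = forward_time v (toward v)"
  using toward_spec[OF assms] by (simp add: remaining_time_def forward_time_def)

lemma remaining_time_away:
  assumes "v \<in> V" "v \<noteq> j" "E v w" "w \<noteq> toward v"
  shows "remaining_time v w = 2 * bsize v w + 1 + access_time v - 2 * (bsize v w + 1) / dg v"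
proof -
  have "j \<notin> branch v w" using toward_eqI assms(3,4) by blast
  moreover have "w \<noteq> j" using calculation head_in_branch by blast
  ultimately show ?thesis using assms(2) by (simp add: remaining_time_def forward_time_def)
qed

lemma card_nbrs_minus:
  assumes "E v w"
  shows "real (card (nbrs V E v - {w})) = dg v - 1"
proof -
  have "w \<in> nbrs V E v" using assms by (simp add: in_nbrs_iff)
  then have "1 \<le> card (nbrs V E v)" using finite_nbrs by (metis Suc_leI card_gt_0_iff empty_iff One_nat_def)
  then show ?thesis using \<open>w \<in> nbrs V E v\<close> finite_nbrs
    by (simp add: deg_def card_Diff_singleton)
qed

lemma dg_pos: "E v w \<Longrightarrow> 0 < dg v"
  using finite_nbrs by (auto simp: deg_def card_gt_0_iff in_nbrs_iff)

lemma two_le_dg: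
  assumes "E v u" "E v w" "u \<noteq> w"
  shows "2 \<le> dg v"
proof -
  have "{u, w} \<subseteq> nbrs V E v" using assms by (auto simp: in_nbrs_iff)
  then have "card {u, w} \<le> deg V E v" by (simp add: deg_def card_mono finite_nbrs)
  then show ?thesis using assms(3) by simp
qed

lemma bsize_toward:
  assumes "v \<in> V" "v \<noteq> j"
  shows "bsize (toward v) v = (\<Sum>w\<in>nbrs V E v - {toward v}. bsize v w + 1)"
  using card_branch_edges[of "toward v" v] toward_spec[OF assms] adj_sym by (simp add: add.commute)

lemma sum_remaining_time_away:
  assumes "v \<in> V" "v \<noteq> j" "A \<subseteq> nbrs V E v - {toward v}"
  shows "(\<Sum>w\<in>A. remaining_time v w) = 2 * (\<Sum>w\<in>A. bsize v w + 1) - real (card A)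
    + real (card A) * access_time v - 2 * (\<Sum>w\<in>A. bsize v w + 1) / dg v"
proof -
  have "(\<Sum>w\<in>A. remaining_time v w)
      = (\<Sum>w\<in>A. 2 * (bsize v w + 1) - 1 + access_time v - 2 * (bsize v w + 1) / dg v)"
  proof (rule sum.cong)
    fix w assume "w \<in> A"
    then have "E v w" "w \<noteq> toward v" using assms(3) by (auto simp: in_nbrs_iff)
    then show "remaining_time v w = 2 * (bsize v w + 1) - 1 + access_time v - 2 * (bsize v w + 1) / dg v"
      using remaining_time_away[OF assms(1,2)] by (simp add: algebra_simps)
  qed simp
  then show ?thesis
    by (simp add: sum.distrib sum_subtractf sum_distrib_left[symmetric] sum_divide_distrib[symmetric])
qed

lemma access_time_first_step:
  assumes "v \<in> V" "v \<noteq> j"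
  shows "access_time v = 1 + (\<Sum>w\<in>nbrs V E v. remaining_time v w) / dg v"
proof -
  let ?p = "toward v" and ?B = "bsize (toward v) v"
  have p: "?p \<in> nbrs V E v" using toward_spec[OF assms] by (simp add: in_nbrs_iff)
  have d: "real (card (nbrs V E v - {?p})) = dg v - 1" "0 < dg v"
    using card_nbrs_minus dg_pos toward_spec(1)[OF assms] by auto
  have "(\<Sum>w\<in>nbrs V E v. remaining_time v w)
      = forward_time v ?p + (2 * ?B - (dg v - 1) + (dg v - 1) * access_time v - 2 * ?B / dg v)"
    using sum.remove[OF finite_nbrs p, of "remaining_time v"] remaining_time_toward[OF assms]
      sum_remaining_time_away[OF assms order.refl] bsize_toward[OF assms] d(1) by simp
  also have "\<dots> = dg v * access_time v - dg v"
  proof -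
    have "2 * ?B * (dg v - 1) / dg v = 2 * ?B - 2 * ?B / dg v"
      using d(2) by (simp add: field_simps)
    moreover have "(dg v - 1) * access_time v = dg v * access_time v - access_time v"
      by (simp add: algebra_simps)
    ultimately show ?thesis using access_time_unfold[OF assms] by linarith
  qed
  finally show ?thesis using d(2) by (simp add: field_simps)
qed

lemma sum_remaining_time_except:
  assumes "E u v" "v \<noteq> j"
  shows "(\<Sum>w\<in>nbrs V E v - {u}. remaining_time v w) = dg v * (access_time v - 1) - remaining_time v u"
proof -
  have "u \<in> nbrs V E v" using assms(1) adj_sym by (simp add: in_nbrs_iff)
  moreover have "v \<in> V" using adj_in_V assms(1) by blast
  ultimately show ?thesis
    using sum.remove[OF finite_nbrs, of u v "remaining_time v"] access_time_first_step
      dg_pos[OF adj_sym[OF assms(1)]] assms(2)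
    by (simp add: field_simps)
qed

lemma remaining_time_bellman_ahead:
  assumes uv: "E u v" and "v \<noteq> j" "j \<in> branch u v"
  shows "remaining_time u v = 1 + (\<Sum>w\<in>V. bbrw_step V E u v w * remaining_time v w)"
proof -
  let ?S = "nbrs V E v - {u}" and ?A = "access_time v" and ?d = "dg v"
  have v: "v \<in> V" "v \<noteq> j" using adj_in_V uv assms(2) by auto
  have "toward v \<noteq> u" using branch_disjoint[OF uv] toward_spec(2)[OF v] assms(3) by auto
  then have "toward v \<in> ?S" using toward_spec(1)[OF v] by (simp add: in_nbrs_iff)
  then have "?S \<noteq> {}" "0 < card ?S" using finite_nbrs by (auto simp: card_gt_0_iff)
  then have "?d - 1 \<noteq> 0" using card_nbrs_minus[OF adj_sym[OF uv]] by linarith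
  have "remaining_time v u = 2 * bsize v u + 1 + ?A - 2 * (bsize v u + 1) / ?d"
    using remaining_time_away[OF v] adj_sym uv \<open>toward v \<noteq> u\<close> by blast
  then have "(\<Sum>w\<in>?S. remaining_time v w)
      = ?d * (?A - 1) - (2 * bsize v u + 1 + ?A - 2 * (bsize v u + 1) / ?d)"
    using sum_remaining_time_except[OF uv v(2)] by simp
  also have "\<dots> = (?d - 1) * (?A - 1 - 2 * (bsize v u + 1) / ?d)"
    using dg_pos[OF adj_sym[OF uv]] by (simp add: field_simps)
  finally have "(\<Sum>w\<in>V. bbrw_step V E u v w * remaining_time v w) = ?A - 1 - 2 * (bsize v u + 1) / ?d"
    using bbrw_step_expectation[OF uv, of "remaining_time v"] \<open>?S \<noteq> {}\<close> \<open>?d - 1 \<noteq> 0\<close>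
      card_nbrs_minus[OF adj_sym[OF uv]]
    by simp
  moreover have "remaining_time u v = ?A - 2 * (bsize v u + 1) / ?d"
    using assms(3) v by (simp add: remaining_time_def forward_time_def)
  ultimately show ?thesis by simp
qed

lemma remaining_time_bellman_behind:
  assumes uv: "E u v" and "v \<noteq> j" "j \<notin> branch u v"
  shows "remaining_time u v = 1 + (\<Sum>w\<in>V. bbrw_step V E u v w * remaining_time v w)"
proof -
  let ?S = "nbrs V E v - {u}" and ?A = "access_time v" and ?d = "dg v"
  have v: "v \<in> V" "v \<noteq> j" using adj_in_V uv assms(2) by auto
  have "j \<in> branch v u" using branch_cover[OF uv target_in_V] assms(3) by blast
  then have "toward v = u" using toward_eqI uv adj_sym by blast
  then have return: "remaining_time v u = forward_time v u"
    using remaining_time_toward[OF v] by simp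
  have "(\<Sum>w\<in>V. bbrw_step V E u v w * remaining_time v w) = 2 * bsize u v + forward_time v u"
  proof (cases "?S = {}")
    case True
    have "bsize u v = (\<Sum>w\<in>?S. bsize v w + 1)"
      using bsize_toward[OF v] \<open>toward v = u\<close> by simp
    then have "bsize u v = 0" by (simp only: True sum.empty)
    then show ?thesis using bbrw_step_expectation[OF uv, of "remaining_time v"] True return by simp
  next
    case False
    then have "0 < card ?S" using finite_nbrs card_gt_0_iff by blast
    then have "?d - 1 \<noteq> 0" using card_nbrs_minus[OF adj_sym[OF uv]] by linarith
    have "(\<Sum>w\<in>?S. remaining_time v w) = ?d * (?A - 1) - forward_time v u"
      using sum_remaining_time_except[OF uv v(2)] return by simp
    also have "\<dots> = (?d - 1) * (2 * bsize u v + forward_time v u)"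
      using access_time_unfold[OF v] \<open>toward v = u\<close> dg_pos[OF adj_sym[OF uv]] by (simp add: field_simps)
    finally show ?thesis
      using bbrw_step_expectation[OF uv, of "remaining_time v"] False \<open>?d - 1 \<noteq> 0\<close>
        card_nbrs_minus[OF adj_sym[OF uv]]
      by simp
  qed
  moreover have "remaining_time u v = 2 * bsize u v + 1 + forward_time v u"
    using assms(3) v by (simp add: remaining_time_def)
  ultimately show ?thesis by simp
qed

lemma remaining_time_bellman:
  "E u v \<Longrightarrow> v \<noteq> j \<Longrightarrow> remaining_time u v = 1 + (\<Sum>w\<in>V. bbrw_step V E u v w * remaining_time v w)"
  using remaining_time_bellman_ahead remaining_time_bellman_behind by blast

lemma forward_time_nonneg:
  assumes "E u v" "j \<in> branch u v"
  shows "0 \<le> forward_time u v"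
  using assms
proof (induction "card (branch u v)" arbitrary: u v rule: less_induct)
  case less
  show ?case
  proof (cases "v = j")
    case True
    then show ?thesis by (simp add: forward_time_def)
  next
    case False
    have v: "v \<in> V" "v \<noteq> j" using adj_in_V less.prems(1) False by auto
    let ?p = "toward v"
    have p: "E v ?p" "j \<in> branch v ?p" using toward_spec[OF v] by auto
    have "?p \<noteq> u" using branch_disjoint[OF less.prems(1)] less.prems(2) p(2) by auto
    have "branch v ?p \<subset> branch u v"
      using branch_nested[OF less.prems(1) p(1) \<open>?p \<noteq> u\<close>] head_in_branch tail_notin_branch[OF p(1)]
      by blast
    moreover have "finite (branch u v)" using branch_subset_V[OF v(1)] finite_V finite_subset by blast
    ultimately have "0 \<le> forward_time v ?p" using less.hyps[OF psubset_card_mono] p by blast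
    have u: "u \<in> nbrs V E v - {?p}" using less.prems(1) adj_sym \<open>?p \<noteq> u\<close> by (simp add: in_nbrs_iff)
    have forward: "forward_time u v = 1 + 2 * bsize ?p v * (dg v - 1) / dg v + forward_time v ?p
        - 2 * (bsize v u + 1) / dg v"
      using access_time_unfold[OF v] v by (simp add: forward_time_def)
    have branch_sizes: "bsize v u + 1 \<le> bsize ?p v"
      using member_le_sum[OF u, of "\<lambda>w. bsize v w + 1"] bsize_toward[OF v] finite_nbrs by simp
    have "2 \<le> dg v" using two_le_dg p(1) less.prems(1) adj_sym \<open>?p \<noteq> u\<close> by blast
    then have "bsize ?p v * 1 \<le> bsize ?p v * (dg v - 1)"
      by (intro mult_left_mono) auto
    then have "bsize v u + 1 \<le> bsize ?p v * (dg v - 1)" using branch_sizes by linarith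
    then have "2 * (bsize v u + 1) / dg v \<le> 2 * bsize ?p v * (dg v - 1) / dg v"
      by (simp add: divide_right_mono)
    then show ?thesis using forward \<open>0 \<le> forward_time v ?p\<close> by linarith
  qed
qed

lemma remaining_time_nonneg:
  assumes "E u v"
  shows "0 \<le> remaining_time u v"
proof -
  have "j \<in> branch u v \<or> j \<in> branch v u" using branch_cover[OF assms target_in_V] .
  then show ?thesis
    using forward_time_nonneg assms adj_sym by (auto simp: remaining_time_def)
qed

theorem bbrw_tail_sums_access_time:
  assumes "i \<in> V" "i \<noteq> j"
  shows "(\<lambda>n. bbrw_tail V E i j n) sums access_time i"
proof -
  have "bbrw_potential V E j remaining_time"
    by (intro bbrw_potential.intro bbrw_potential_axioms.intro sgraph_axioms
        remaining_time_bellman remaining_time_nonneg) (simp add: remaining_time_def)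
  then interpret bbrw_potential V E j remaining_time .
  have "start_value i = access_time i"
    using access_time_first_step[OF assms] by (simp add: start_value_def)
  then show ?thesis using bbrw_tail_sums_start_value[OF assms] by simp
qed

lemma toward_along_path:
  assumes vs: "is_path E vs" "last vs = j" and n: "Suc n < length vs"
  shows "toward (vs ! n) = vs ! Suc n"
proof -
  have edge: "E (vs ! m) (vs ! Suc m)" if "Suc m < length vs" for m
    using vs(1) that by (simp add: is_path_def)
  have "vs ! m \<in> branch (vs ! n) (vs ! Suc n)" if "Suc n \<le> m" "m < length vs" for m
    using that
  proof (induction m rule: dec_induct)
    case base
    show ?case by (rule head_in_branch)
  next
    case (step m)
    have "{vs ! m, vs ! Suc m} \<noteq> {vs ! n, vs ! Suc n}"
      using vs(1) step.hyps step.prems by (auto simp: is_path_def doubleton_eq_iff nth_eq_iff_index_eq)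
    moreover have "vs ! m \<in> branch (vs ! n) (vs ! Suc n)" using step by simp
    moreover have "E (vs ! m) (vs ! Suc m)" using edge step.prems by simp
    ultimately show ?case using branch_closed by blast
  qed
  moreover have "vs ! (length vs - 1) = j"
    using vs(2) n last_conv_nth[of vs] by (metis list.size(3) not_less_zero)
  ultimately have "j \<in> branch (vs ! n) (vs ! Suc n)" using n by force
  then show ?thesis using toward_eqI edge n by blast
qed

lemma access_time_along_path:
  assumes vs: "is_path E vs" "last vs = j" and n: "n < length vs"
  shows "access_time (vs ! n) = (\<Sum>m\<in>{n..<length vs - 1}. access_increment (vs ! m))"
proof -
  have "n \<le> length vs - 1" using n by simp
  then show ?thesis
  proof (induction n rule: inc_induct)
    case base
    have "vs ! (length vs - 1) = j"
      using vs(2) n last_conv_nth[of vs] by (metis list.size(3) not_less_zero)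
    then show ?case by (simp add: access_time_target)
  next
    case (step n)
    have "E (vs ! n) (vs ! Suc n)" using vs(1) step.hyps by (simp add: is_path_def)
    then have "vs ! n \<in> V" by (rule adj_in_V)
    moreover have "vs ! n \<noteq> j"
      using vs step.hyps by (auto simp: is_path_def last_conv_nth nth_eq_iff_index_eq)
    ultimately have "access_time (vs ! n) = access_increment (vs ! n) + access_time (vs ! Suc n)"
      using access_time_step toward_along_path[OF vs, of n] step.hyps by simp
    then show ?case using step by (simp add: sum.atLeast_Suc_lessThan)
  qed
qed

lemma access_time_path_formula:
  assumes vs: "is_path E vs" "last vs = j" and len: "2 \<le> length vs"
  shows "access_time (hd vs) =
    (\<Sum>n\<in>{..<length vs - 1}.
        1 + 2 * real (card (comp_edges E (vs ! n) (vs ! (n + 1))))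
              * (real (deg V E (vs ! n)) - 1) / real (deg V E (vs ! n)))
     - (\<Sum>n\<in>{1..<length vs - 1}.
          2 * real (card (comp_edges E (vs ! (n - 1)) (vs ! n))) / real (deg V E (vs ! n)))
     - (\<Sum>n\<in>{1..<length vs - 1}. 2 / real (deg V E (vs ! n)))"
proof -
  let ?N = "length vs - 1"
  let ?a = "\<lambda>m. 1 + 2 * real (card (comp_edges E (vs ! m) (vs ! (m + 1))))
              * (real (deg V E (vs ! m)) - 1) / real (deg V E (vs ! m))"
  let ?b = "\<lambda>n. 2 * (real (card (comp_edges E (vs ! (n - 1)) (vs ! n))) + 1) / real (deg V E (vs ! n))"
  have "vs \<noteq> []" using len by auto
  have "access_time (hd vs) = (\<Sum>m<?N. access_increment (vs ! m))"
    using access_time_along_path[OF vs, of 0] len \<open>vs \<noteq> []\<close> by (simp add: hd_conv_nth atLeast0LessThan)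
  also have "\<dots> = (\<Sum>m<?N. ?a m - (if Suc m = ?N then 0 else ?b (Suc m)))"
  proof (rule sum.cong)
    fix m assume "m \<in> {..<?N}"
    then have "Suc m < length vs" by simp
    moreover have "vs ! Suc m = j \<longleftrightarrow> Suc m = ?N"
      using vs \<open>Suc m < length vs\<close> \<open>vs \<noteq> []\<close>
      by (auto simp: is_path_def last_conv_nth nth_eq_iff_index_eq)
    ultimately show "access_increment (vs ! m) = ?a m - (if Suc m = ?N then 0 else ?b (Suc m))"
      using toward_along_path[OF vs] by (simp add: access_increment_def comp_edges_eq_branch_edges)
  qed simp
  also have "\<dots> = (\<Sum>m<?N. ?a m) - (\<Sum>n\<in>{1..<?N}. ?b n)"
    by (rule sum_lessThan_minus_shifted)
  finally show ?thesis
    by (simp add: add_divide_distrib distrib_left sum.distrib)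
qed

end

theorem proposition3:
  fixes V :: "'a set" and E :: "'a \<Rightarrow> 'a \<Rightarrow> bool" and i j :: 'a and vs :: "'a list"
  assumes "is_tree V E"
    and "i \<in> V" and "j \<in> V"
    and "is_path E vs" and "hd vs = i" and "last vs = j"
    and "2 \<le> length vs"
  shows "(\<lambda>n. bbrw_tail V E i j n) sums
    ((\<Sum>n\<in>{..<length vs - 1}.
        1 + 2 * real (card (comp_edges E (vs ! n) (vs ! (n + 1))))
              * (real (deg V E (vs ! n)) - 1) / real (deg V E (vs ! n)))
     - (\<Sum>n\<in>{1..<length vs - 1}.
          2 * real (card (comp_edges E (vs ! (n - 1)) (vs ! n))) / real (deg V E (vs ! n)))
     - (\<Sum>n\<in>{1..<length vs - 1}. 2 / real (deg V E (vs ! n))))"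
proof -
  interpret tree_target V E j
    by (simp add: tree_target_def tree_target_axioms_def finite_tree_def assms(1,3))
  have "hd vs \<noteq> last vs"
    using assms(4,7) by (auto simp: is_path_def hd_conv_nth last_conv_nth nth_eq_iff_index_eq)
  then have "i \<noteq> j" using assms(5,6) by simp
  then show ?thesis
    using bbrw_tail_sums_access_time[OF assms(2)] access_time_path_formula[OF assms(4,6,7)] assms(5)
    by simp
qed

end
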